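(* Let $\boldsymbol\lambda=(\lambda^{(1)},\dots,\lambda^{(k)})$ be polynomial $\mathfrak{gl}_{1|1}$-weights with $\lambda^{(s)}_2=0$ and $\lambda^{(s)}_1>0$ for all $s$, let $\boldsymbol b\in\mathbb{C}^k$, and let $\boldsymbol a=(a_1,\dots,a_n)$ be the sequence obtained by arranging the union of the sequences $\{b_s,b_s-1,\dots,b_s-\lambda^{(s)}_1+1\}$, $s=1,\dots,k$, in decreasing order of real parts. If $L(\boldsymbol\lambda,\boldsymbol b)$ is cyclic, then there exists a surjective $\mathrm{Y}(\mathfrak{gl}_{1|1})$-module homomorphism $V(\boldsymbol a)=\mathbb{C}^{1|1}(a_1)\otimes\cdots\otimes\mathbb{C}^{1|1}(a_n)\to L(\boldsymbol\lambda,\boldsymbol b)$ mapping the vacuum vector $v_1^{\otimes n}$ to the vacuum vector $|0\rangle$.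
   Context: $\mathbb{C}^{1|1}$ has basis $v_1$ (even), $v_2$ (odd), $|1|=\bar0,|2|=\bar1$; $\mathfrak{gl}_{1|1}$ has basis $e_{ij}$ with $[e_{ij},e_{rs}]=\delta_{jr}e_{is}-(-1)^{(|i|+|j|)(|r|+|s|)}\delta_{is}e_{rj}$, acting on $\mathbb{C}^{1|1}$ by $e_{ij}v_r=\delta_{jr}v_i$. $P=\sum_{i,j}(-1)^{|j|}E_{ij}\otimes E_{ji}$, $\mathcal R(x)=1+P/x$. $\mathrm{Y}(\mathfrak{gl}_{1|1})$ is generated by $T^{(r)}_{ij}$ ($r\ge1$, parity $|i|+|j|$) with $\mathcal R^{(12)}(x_1-x_2)T^{(13)}(x_1)T^{(23)}(x_2)=T^{(23)}(x_2)T^{(13)}(x_1)\mathcal R^{(12)}(x_1-x_2)$, $T_{ij}(x)=\delta_{ij}+\sum_rT^{(r)}_{ij}x^{-r}$; coproduct $\Delta(T_{ij}(x))=\sum_rT_{rj}(x)\otimes T_{ir}(x)$. Evaluation module $M(z)$: $T_{ij}(x)$ acts by $\delta_{ij}+(-1)^{|j|}e_{ji}(x-z)^{-1}$. $L_\lambda$ is the irreducible $\mathfrak{gl}_{1|1}$-module generated by an even $v_\lambda$ with $e_{12}v_\lambda=0$, $e_{ii}v_\lambda=\lambda_iv_\lambda$ (so $\mathbb{C}^{1|1}\cong L_{(1,0)}$). $L(\boldsymbol\lambda,\boldsymbol b)=\bigotimes_sL_{\lambda^{(s)}}(b_s)$ with vacuum $|0\rangle=\otimes v_{\lambda^{(s)}}$;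 it is cyclic if generated by $|0\rangle$ as a $\mathrm{Y}(\mathfrak{gl}_{1|1})$-module. *)

theory Defs
  imports Complex_Main "HOL-Library.Multiset" "HOL-Computational_Algebra.Formal_Power_Series"
begin

(* Conventions.
   gl(1|1) indices 1,2 are encoded as bool: False = 1 (even), True = 2 (odd).
   A two-dimensional factor L_(l1,l2) (l1+l2 <> 0) has homogeneous basis
   False = v_lambda (even), True = e21 v_lambda (odd); C^{1|1} = L_(1,0) with
   False = v_1, True = v_2. *)

definition par :: "bool \<Rightarrow> nat" where
  "par x = (if x then 1 else 0)"

(* matrix entry <p| e_ij |q> on L_(l1,l2) *)
definition glE :: "complex \<times> complex \<Rightarrow> bool \<Rightarrow> bool \<Rightarrow> bool \<Rightarrow> bool \<Rightarrow> complex" where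
  "glE lam i j p q = (case (i, j) of
      (False, False) \<Rightarrow> (if p = q then (if q then fst lam - 1 else fst lam) else 0)
    | (True, True) \<Rightarrow> (if p = q then (if q then snd lam + 1 else snd lam) else 0)
    | (False, True) \<Rightarrow> (if \<not> p \<and> q then fst lam + snd lam else 0)
    | (True, False) \<Rightarrow> (if p \<and> \<not> q then 1 else 0))"

(* evaluation module L_lam(z): matrix entry of T_ab(x) = delta_ab + (-1)^|b| e_ba (x-z)^{-1},
   as a formal power series in x^{-1} *)
definition evT :: "complex \<times> complex \<Rightarrow> complex \<Rightarrow> bool \<Rightarrow> bool \<Rightarrow> bool \<Rightarrow> bool \<Rightarrow> complex fps" where
  "evT lam z a b p q = Abs_fps (\<lambda>m. if m = 0 then (if a = b \<and> p = q then 1 else 0)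
      else (-1) ^ par b * z ^ (m - 1) * glE lam b a p q)"

(* index chains c_0 = j, ..., c_n = i for the iterated coproduct
   Delta^(n) T_ij = sum T_{c1 c0} (x) T_{c2 c1} (x) ... (x) T_{cn c(n-1)} *)
definition chains :: "nat \<Rightarrow> bool \<Rightarrow> bool \<Rightarrow> bool list set" where
  "chains n j i = {cs. length cs = Suc n \<and> cs ! 0 = j \<and> cs ! n = i}"

(* Koszul sign exponent for (A_0 (x) ... (x) A_(n-1)) (q_0 (x) ... (x) q_(n-1)) *)
definition koszul :: "nat \<Rightarrow> bool list \<Rightarrow> bool list \<Rightarrow> nat" where
  "koszul n cs q = (\<Sum>t<n. \<Sum>s<t. (par (cs ! Suc t) + par (cs ! t)) * par (q ! s))"

(* matrix entry <p| T_ij(x) |q> on L_lam0(z0) (x) ... (x) L_lam(n-1)(z(n-1)) *)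
definition Yent :: "(nat \<Rightarrow> complex \<times> complex) \<Rightarrow> (nat \<Rightarrow> complex) \<Rightarrow> nat
    \<Rightarrow> bool \<Rightarrow> bool \<Rightarrow> bool list \<Rightarrow> bool list \<Rightarrow> complex fps" where
  "Yent lams zs n i j p q = (\<Sum>cs\<in>chains n j i. (-1) ^ koszul n cs q *
      (\<Prod>s<n. evT (lams s) (zs s) (cs ! Suc s) (cs ! s) (p ! s) (q ! s)))"

definition basis :: "nat \<Rightarrow> bool list set" where
  "basis n = {p. length p = n}"

(* the tensor product space, vectors = coordinate functions on the basis *)
definition space :: "nat \<Rightarrow> (bool list \<Rightarrow> complex) set" where
  "space n = {v. \<forall>p. length p \<noteq> n \<longrightarrow> v p = 0}"

definition Yact :: "(nat \<Rightarrow> complex \<times> complex) \<Rightarrow> (nat \<Rightarrow> complex) \<Rightarrow> nat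
    \<Rightarrow> nat \<Rightarrow> bool \<Rightarrow> bool \<Rightarrow> (bool list \<Rightarrow> complex) \<Rightarrow> (bool list \<Rightarrow> complex)" where
  "Yact lams zs n r i j v = (\<lambda>p. if length p = n
      then (\<Sum>q\<in>basis n. fps_nth (Yent lams zs n i j p q) r * v q) else 0)"

definition vac :: "nat \<Rightarrow> bool list \<Rightarrow> complex" where
  "vac n = (\<lambda>p. if p = replicate n False then 1 else 0)"

definition bparity :: "bool list \<Rightarrow> bool" where
  "bparity p = odd (length (filter id p))"

definition homog :: "nat \<Rightarrow> bool \<Rightarrow> (bool list \<Rightarrow> complex) set" where
  "homog n e = {v \<in> space n. \<forall>p. v p \<noteq> 0 \<longrightarrow> bparity p = e}"

definition Ycyclic :: "(nat \<Rightarrow> complex \<times> complex) \<Rightarrow> (nat \<Rightarrow> complex) \<Rightarrow> nat \<Rightarrow> bool" where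
  "Ycyclic lams zs n = (\<forall>W. W \<subseteq> space n \<and> vac n \<in> W
      \<and> (\<forall>u\<in>W. \<forall>w\<in>W. (\<lambda>p. u p + w p) \<in> W)
      \<and> (\<forall>c::complex. \<forall>u\<in>W. (\<lambda>p. c * u p) \<in> W)
      \<and> (\<forall>r\<ge>1. \<forall>i j. \<forall>u\<in>W. Yact lams zs n r i j u \<in> W)
      \<longrightarrow> W = space n)"

definition Yhom :: "(nat \<Rightarrow> complex \<times> complex) \<Rightarrow> (nat \<Rightarrow> complex) \<Rightarrow> nat
    \<Rightarrow> (nat \<Rightarrow> complex \<times> complex) \<Rightarrow> (nat \<Rightarrow> complex) \<Rightarrow> nat
    \<Rightarrow> ((bool list \<Rightarrow> complex) \<Rightarrow> (bool list \<Rightarrow> complex)) \<Rightarrow> bool" where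
  "Yhom lams zs n lams' zs' n' f = (
      (\<forall>v\<in>space n. f v \<in> space n')
    \<and> (\<forall>u\<in>space n. \<forall>w\<in>space n. f (\<lambda>p. u p + w p) = (\<lambda>p. f u p + f w p))
    \<and> (\<forall>c::complex. \<forall>u\<in>space n. f (\<lambda>p. c * u p) = (\<lambda>p. c * f u p))
    \<and> (\<forall>e. \<forall>v\<in>homog n e. f v \<in> homog n' e)
    \<and> (\<forall>r\<ge>1. \<forall>i j. \<forall>v\<in>space n.
          f (Yact lams zs n r i j v) = Yact lams' zs' n' r i j (f v)))"

end

theory Submission
  imports Defs
begin

text \<open>
  The homomorphism is assembled from two kinds of elementary intertwiners, each an explicit even matrix
  sending the vacuum to a nonzero multiple of the vacuum: the R-matrix \<open>1 + (y - x) P\<close> from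
  \<open>\<complex>\<^sup>1\<^sup>|\<^sup>1(y) \<otimes> \<complex>\<^sup>1\<^sup>|\<^sup>1(x)\<close> to \<open>\<complex>\<^sup>1\<^sup>|\<^sup>1(x) \<otimes> \<complex>\<^sup>1\<^sup>|\<^sup>1(y)\<close>, whose vacuum coefficient \<open>1 + y - x\<close> vanishes
  only for \<open>x = y + 1\<close>, and the fusion map
  \<open>L\<^sub>(\<^sub>l\<^sub>,\<^sub>0\<^sub>)(z) \<otimes> \<complex>\<^sup>1\<^sup>|\<^sup>1(z - l) \<rightarrow> L\<^sub>(\<^sub>l\<^sub>+\<^sub>1\<^sub>,\<^sub>0\<^sub>)(z)\<close>.
  As \<open>a\<close> decreases in real part, no entry is an earlier entry plus one, so R-matrices reorder \<open>V(a)\<close>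
  into the concatenation of the segments \<open>b\<^sub>s, b\<^sub>s - 1, \<dots>, b\<^sub>s - \<lambda>\<^sub>s + 1\<close>, and fusing each segment
  lands in \<open>L(\<lambda>, b)\<close>. The image of the composite is a submodule containing the vacuum, hence
  everything by cyclicity. Intertwining is checked on the matrix coefficients of \<open>T(x)\<close>: the
  coproduct reduces it to one or two factors, where it becomes a partial fraction identity.
\<close>

lemma finite_basis [simp]: "finite (basis n)"
  unfolding basis_def using finite_lists_length_eq[of "UNIV :: bool set" n] by simp

lemma mem_basis_iff [simp]: "p \<in> basis n \<longleftrightarrow> length p = n"
  by (simp add: basis_def)

lemma finite_chains [simp]: "finite (chains n j i)"
  by (rule finite_subset[of _ "basis (Suc n)"]) (auto simp: chains_def)

definition odd_count :: "bool list \<Rightarrow> nat" where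
  "odd_count q = length (filter id q)"

lemma odd_count_Nil [simp]: "odd_count [] = 0"
  by (simp add: odd_count_def)

lemma odd_count_append [simp]: "odd_count (p @ q) = odd_count p + odd_count q"
  by (simp add: odd_count_def)

lemma bparity_eq_odd_count: "bparity p = odd (odd_count p)"
  by (simp add: bparity_def odd_count_def)

lemma sum_par_nth: "(\<Sum>s<length q. par (q ! s)) = odd_count q"
proof (induction q)
  case (Cons x q)
  have "(\<Sum>s<length (x # q). par ((x # q) ! s)) = par x + (\<Sum>s<length q. par ((x # q) ! Suc s))"
    unfolding length_Cons sum.lessThan_Suc_shift by simp
  with Cons.IH show ?case by (simp add: odd_count_def par_def)
qed (simp add: odd_count_def)

lemma neg_one_power_eq_if_even_add:
  assumes "even (m + n)"
  shows "(-1 :: 'a :: ring_1) ^ m = (-1) ^ n"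
  using assms by (simp add: minus_one_power_iff)

lemma neg_one_power_mult_cong:
  assumes "even x \<longleftrightarrow> even y"
  shows "(-1 :: 'a :: ring_1) ^ (a * x) = (-1) ^ (a * y)"
  using assms by (simp add: minus_one_power_iff)

subsection \<open>Coproduct formula\<close>

lemma Yent_cong:
  assumes "\<And>s. s < n \<Longrightarrow> lams s = lams' s \<and> zs s = zs' s"
  shows "Yent lams zs n i j p q = Yent lams' zs' n i j p q"
  unfolding Yent_def using assms by (intro sum.cong prod.cong refl) auto

lemma Yent_0: "Yent lams zs 0 i j p q = (if i = j then 1 else 0)"
proof -
  have "chains 0 j i = (if i = j then {[j]} else {})"
    by (auto simp: chains_def length_Suc_conv)
  then show ?thesis by (simp add: Yent_def koszul_def)
qed

lemma chains_Suc: "chains (Suc n) j i = (\<Union>c. (\<lambda>cs. cs @ [i]) ` chains n j c)"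
proof (intro set_eqI iffI)
  fix cs assume "cs \<in> chains (Suc n) j i"
  then have len: "length cs = Suc (Suc n)" and ends: "cs ! 0 = j" "cs ! Suc n = i"
    by (simp_all add: chains_def)
  obtain ds d where cs: "cs = ds @ [d]"
    using len by (cases cs rule: rev_cases) auto
  with len ends have "d = i" "ds \<in> chains n j (ds ! n)"
    by (simp_all add: chains_def nth_append)
  with cs show "cs \<in> (\<Union>c. (\<lambda>cs. cs @ [i]) ` chains n j c)" by blast
qed (auto simp: chains_def nth_append)

lemma sum_chains_Suc:
  "(\<Sum>cs\<in>chains (Suc n) j i. g cs) = (\<Sum>c\<in>UNIV. \<Sum>cs\<in>chains n j c. g (cs @ [i]))"
proof -
  have "(\<lambda>cs. cs @ [i]) ` chains n j c \<inter> (\<lambda>cs. cs @ [i]) ` chains n j c' = {}" if "c \<noteq> c'" for c c'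
    using that by (auto simp: chains_def)
  then have "(\<Sum>cs\<in>chains (Suc n) j i. g cs) = (\<Sum>c\<in>UNIV. sum g ((\<lambda>cs. cs @ [i]) ` chains n j c))"
    unfolding chains_Suc by (intro sum.UNION_disjoint) simp_all
  also have "\<dots> = (\<Sum>c\<in>UNIV. \<Sum>cs\<in>chains n j c. g (cs @ [i]))"
    by (intro sum.cong refl sum.reindex_cong[where l = "\<lambda>cs. cs @ [i]"]) (auto simp: inj_on_def)
  finally show ?thesis .
qed

lemma koszul_snoc:
  assumes "length cs = Suc n" "length q = n"
  shows "koszul (Suc n) (cs @ [i]) (q @ [y]) = koszul n cs q + (par i + par (cs ! n)) * odd_count q"
proof -
  have "koszul (Suc n) (cs @ [i]) (q @ [y])
      = koszul n cs q + (\<Sum>s<n. (par i + par (cs ! n)) * par (q ! s))"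
    unfolding koszul_def sum.lessThan_Suc using assms by (simp add: nth_append)
  also have "\<dots> = koszul n cs q + (par i + par (cs ! n)) * odd_count q"
    using sum_par_nth[of q] assms(2) by (simp add: sum_distrib_left[symmetric])
  finally show ?thesis .
qed

lemma Yent_snoc:
  assumes "length p = n" "length q = n"
  shows "Yent lams zs (Suc n) i j (p @ [x]) (q @ [y]) =
    (\<Sum>c\<in>UNIV. (-1) ^ ((par i + par c) * odd_count q) * Yent lams zs n c j p q
        * evT (lams n) (zs n) i c x y)"
proof -
  let ?E = "\<lambda>cs. \<Prod>s<n. evT (lams s) (zs s) (cs ! Suc s) (cs ! s) (p ! s) (q ! s)"
  have "(-1) ^ koszul (Suc n) (cs @ [i]) (q @ [y]) *
      (\<Prod>s<Suc n. evT (lams s) (zs s) ((cs @ [i]) ! Suc s) ((cs @ [i]) ! s) ((p @ [x]) ! s) ((q @ [y]) ! s))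
    = (-1) ^ ((par i + par c) * odd_count q) * ((-1) ^ koszul n cs q * ?E cs)
        * evT (lams n) (zs n) i c x y"
    if "cs \<in> chains n j c" for cs c
  proof -
    have cs: "length cs = Suc n" "cs ! n = c"
      using that by (simp_all add: chains_def)
    have "(\<Prod>s<n. evT (lams s) (zs s) ((cs @ [i]) ! Suc s) ((cs @ [i]) ! s) ((p @ [x]) ! s) ((q @ [y]) ! s))
        = ?E cs"
      using cs assms by (intro prod.cong) (simp_all add: nth_append)
    with cs assms show ?thesis
      by (simp add: koszul_snoc nth_append power_add mult_ac)
  qed
  then show ?thesis
    unfolding Yent_def sum_chains_Suc by (simp add: sum_distrib_left sum_distrib_right)
qed

text \<open>A pair \<open>(\<lambda>, z)\<close> stands for the evaluation module \<open>L\<^sub>\<lambda>(z)\<close>; a list of them for their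
  tensor product.\<close>

type_synonym evtensor = "((complex \<times> complex) \<times> complex) list"

definition T_coeff :: "evtensor \<Rightarrow> bool \<Rightarrow> bool \<Rightarrow> bool list \<Rightarrow> bool list \<Rightarrow> complex fps" where
  "T_coeff M = Yent (\<lambda>s. fst (M ! s)) (\<lambda>s. snd (M ! s)) (length M)"

lemma T_coeff_Nil: "T_coeff [] i j p q = (if i = j then 1 else 0)"
  by (simp add: T_coeff_def Yent_0)

lemma T_coeff_snoc:
  assumes "length p = length M" "length q = length M"
  shows "T_coeff (M @ [m]) i j (p @ [x]) (q @ [y]) =
    (\<Sum>c\<in>UNIV. (-1) ^ ((par i + par c) * odd_count q) * T_coeff M c j p q * evT (fst m) (snd m) i c x y)"
proof -
  have "Yent (\<lambda>s. fst ((M @ [m]) ! s)) (\<lambda>s. snd ((M @ [m]) ! s)) (length M) c j p q = T_coeff M c j p q" for c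
    unfolding T_coeff_def by (intro Yent_cong) (simp add: nth_append)
  with assms show ?thesis
    unfolding T_coeff_def[of "M @ [m]"] by (simp add: Yent_snoc)
qed

lemma T_coeff_single: "T_coeff [m] i j [x] [y] = evT (fst m) (snd m) i j x y"
  using T_coeff_snoc[of "[]" "[]" "[]" m i j x y] by (cases j) (simp_all add: T_coeff_Nil UNIV_bool)

lemma coproduct_sign:
  "(-1 :: 'a :: ring_1) ^ ((par i + par c) * (m1 + m2)) * (-1) ^ ((par c + par d) * m1)
    = (-1) ^ ((par i + par d) * m1) * (-1) ^ ((par i + par c) * m2)"
  unfolding power_add[symmetric]
  by (rule neg_one_power_eq_if_even_add) (cases i; cases c; cases d; auto simp: par_def)

text \<open>The sign is the Koszul sign of moving \<open>T\<^sub>i\<^sub>c(x)\<close>, of parity \<open>i + c\<close>, past \<open>q\<^sub>1\<close>.\<close>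

lemma T_coeff_append:
  assumes "length p1 = length M1" "length q1 = length M1" "length p2 = length M2" "length q2 = length M2"
  shows "T_coeff (M1 @ M2) i j (p1 @ p2) (q1 @ q2) =
    (\<Sum>c\<in>UNIV. (-1) ^ ((par i + par c) * odd_count q1) * T_coeff M1 c j p1 q1 * T_coeff M2 i c p2 q2)"
  using assms(3,4)
proof (induction M2 arbitrary: i p2 q2 rule: rev_induct)
  case Nil
  then show ?case by (cases i) (simp_all add: T_coeff_Nil UNIV_bool par_def)
next
  case (snoc m M2 i p2 q2)
  obtain p2' x where p2: "p2 = p2' @ [x]" "length p2' = length M2"
    using snoc.prems by (cases p2 rule: rev_cases) auto
  obtain q2' y where q2: "q2 = q2' @ [y]" "length q2' = length M2"
    using snoc.prems by (cases q2 rule: rev_cases) auto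
  let ?s = "\<lambda>e. (-1 :: complex fps) ^ e"
  let ?E = "\<lambda>c. evT (fst m) (snd m) i c x y"
  have "T_coeff (M1 @ M2 @ [m]) i j (p1 @ p2) (q1 @ q2) = (\<Sum>c\<in>UNIV. ?s ((par i + par c) * odd_count (q1 @ q2')) *
      T_coeff (M1 @ M2) c j (p1 @ p2') (q1 @ q2') * ?E c)"
    using T_coeff_snoc[of "p1 @ p2'" "M1 @ M2" "q1 @ q2'" m i j x y] assms p2 q2 by simp
  also have "\<dots> = (\<Sum>c\<in>UNIV. \<Sum>d\<in>UNIV. ?s ((par i + par c) * odd_count (q1 @ q2')) *
      (?s ((par c + par d) * odd_count q1) * T_coeff M1 d j p1 q1 * T_coeff M2 c d p2' q2') * ?E c)"
    by (simp add: snoc.IH[OF p2(2) q2(2)] sum_distrib_left sum_distrib_right)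
  also have "\<dots> = (\<Sum>c\<in>UNIV. \<Sum>d\<in>UNIV. ?s ((par i + par d) * odd_count q1) * T_coeff M1 d j p1 q1 *
      (?s ((par i + par c) * odd_count q2') * T_coeff M2 c d p2' q2' * ?E c))"
  proof (intro sum.cong refl)
    fix c d
    have "?s ((par i + par c) * odd_count (q1 @ q2')) * ?s ((par c + par d) * odd_count q1) =
        ?s ((par i + par d) * odd_count q1) * ?s ((par i + par c) * odd_count q2')"
      unfolding odd_count_append by (rule coproduct_sign)
    then show "?s ((par i + par c) * odd_count (q1 @ q2')) *
        (?s ((par c + par d) * odd_count q1) * T_coeff M1 d j p1 q1 * T_coeff M2 c d p2' q2') * ?E c =
      ?s ((par i + par d) * odd_count q1) * T_coeff M1 d j p1 q1 *
        (?s ((par i + par c) * odd_count q2') * T_coeff M2 c d p2' q2' * ?E c)"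
      by (simp add: mult_ac)
  qed
  also have "\<dots> = (\<Sum>d\<in>UNIV. ?s ((par i + par d) * odd_count q1) * T_coeff M1 d j p1 q1 *
      (\<Sum>c\<in>UNIV. ?s ((par i + par c) * odd_count q2') * T_coeff M2 c d p2' q2' * ?E c))"
    by (subst sum.swap) (simp add: sum_distrib_left)
  finally show ?case
    using T_coeff_snoc[OF p2(2) q2(2)] p2 q2 by simp
qed

subsection \<open>Intertwining matrices\<close>

text \<open>A map \<open>V\<^sub>A \<rightarrow> V\<^sub>B\<close> is stored as its matrix \<open>F p q\<close>, \<open>p\<close> a basis vector of \<open>V\<^sub>B\<close> and \<open>q\<close> one of \<open>V\<^sub>A\<close>;
  \<open>T_mat B F\<close> and \<open>mat_T F A\<close> are the matrices of \<open>T\<^sub>i\<^sub>j(x) F\<close> and \<open>F T\<^sub>i\<^sub>j(x)\<close>.\<close>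

type_synonym coeff_mat = "bool list \<Rightarrow> bool list \<Rightarrow> complex"

definition T_mat :: "evtensor \<Rightarrow> coeff_mat \<Rightarrow> bool \<Rightarrow> bool \<Rightarrow> bool list \<Rightarrow> bool list \<Rightarrow> complex fps" where
  "T_mat B F i j p q = (\<Sum>t\<in>basis (length B). T_coeff B i j p t * fps_const (F t q))"

definition mat_T :: "coeff_mat \<Rightarrow> evtensor \<Rightarrow> bool \<Rightarrow> bool \<Rightarrow> bool list \<Rightarrow> bool list \<Rightarrow> complex fps" where
  "mat_T F A i j p q = (\<Sum>t\<in>basis (length A). fps_const (F p t) * T_coeff A i j t q)"

definition is_hom_mat :: "evtensor \<Rightarrow> evtensor \<Rightarrow> coeff_mat \<Rightarrow> bool" where
  "is_hom_mat A B F \<longleftrightarrow>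
    (\<forall>p q. F p q \<noteq> 0 \<longrightarrow> length p = length B \<and> length q = length A
        \<and> (even (odd_count p) \<longleftrightarrow> even (odd_count q))) \<and>
    (\<forall>i j p q. length p = length B \<longrightarrow> length q = length A \<longrightarrow> T_mat B F i j p q = mat_T F A i j p q)"

lemma is_hom_mat_support:
  "is_hom_mat A B F \<Longrightarrow> F p q \<noteq> 0 \<Longrightarrow>
    length p = length B \<and> length q = length A \<and> (even (odd_count p) \<longleftrightarrow> even (odd_count q))"
  unfolding is_hom_mat_def by blast

lemma is_hom_mat_commute:
  "is_hom_mat A B F \<Longrightarrow> length p = length B \<Longrightarrow> length q = length A \<Longrightarrow> T_mat B F i j p q = mat_T F A i j p q"
  unfolding is_hom_mat_def by blast

lemma is_hom_matI:
  assumes "\<And>p q. F p q \<noteq> 0 \<Longrightarrow>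
      length p = length B \<and> length q = length A \<and> (even (odd_count p) \<longleftrightarrow> even (odd_count q))"
    and "\<And>i j p q. length p = length B \<Longrightarrow> length q = length A \<Longrightarrow> T_mat B F i j p q = mat_T F A i j p q"
  shows "is_hom_mat A B F"
  using assms unfolding is_hom_mat_def by blast

definition mat_one :: "nat \<Rightarrow> coeff_mat" where
  "mat_one n p q = (if p = q \<and> length q = n then 1 else 0)"

definition mat_mult :: "nat \<Rightarrow> coeff_mat \<Rightarrow> coeff_mat \<Rightarrow> coeff_mat" where
  "mat_mult n G F p q = (\<Sum>t\<in>basis n. G p t * F t q)"

definition mat_tensor :: "nat \<Rightarrow> nat \<Rightarrow> coeff_mat \<Rightarrow> coeff_mat \<Rightarrow> coeff_mat" where
  "mat_tensor nA nB F G p q = F (take nB p) (take nA q) * G (drop nB p) (drop nA q)"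

lemma is_hom_mat_one: "is_hom_mat A A (mat_one (length A))"
proof -
  have "T_mat A (mat_one (length A)) i j p q = T_coeff A i j p q" if "length q = length A" for i j p q
  proof -
    have "T_mat A (mat_one (length A)) i j p q = (\<Sum>t\<in>basis (length A). if t = q then T_coeff A i j p t else 0)"
      unfolding T_mat_def by (intro sum.cong) (auto simp: mat_one_def)
    with that show ?thesis by (simp add: sum.delta')
  qed
  moreover have "mat_T (mat_one (length A)) A i j p q = T_coeff A i j p q" if "length p = length A" for i j p q
  proof -
    have "mat_T (mat_one (length A)) A i j p q = (\<Sum>t\<in>basis (length A). if p = t then T_coeff A i j t q else 0)"
      unfolding mat_T_def by (intro sum.cong) (auto simp: mat_one_def)
    with that show ?thesis by (simp add: sum.delta)
  qed
  ultimately show ?thesis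
    unfolding is_hom_mat_def by (simp add: mat_one_def)
qed

lemma fps_const_sum: "fps_const (sum f S) = (\<Sum>x\<in>S. fps_const (f x))"
  by (induct S rule: infinite_finite_induct) (simp_all flip: fps_const_add)

lemma is_hom_mat_mult:
  assumes F: "is_hom_mat A B F" and G: "is_hom_mat B C G"
  shows "is_hom_mat A C (mat_mult (length B) G F)"
  unfolding is_hom_mat_def
proof (intro conjI allI impI)
  fix p q :: "bool list" assume "mat_mult (length B) G F p q \<noteq> 0"
  then obtain t where "G p t * F t q \<noteq> 0"
    unfolding mat_mult_def by (meson sum.not_neutral_contains_not_neutral)
  then show "length p = length C" "length q = length A" "even (odd_count p) \<longleftrightarrow> even (odd_count q)"
    using is_hom_mat_support[OF F] is_hom_mat_support[OF G] by auto
next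
  fix i j :: bool and p q :: "bool list"
  assume p: "length p = length C" and q: "length q = length A"
  have "T_mat C (mat_mult (length B) G F) i j p q
      = (\<Sum>t\<in>basis (length B). T_mat C G i j p t * fps_const (F t q))"
    unfolding T_mat_def mat_mult_def fps_const_sum
    by (simp add: sum_distrib_left sum_distrib_right mult.assoc flip: fps_const_mult) (rule sum.swap)
  also have "\<dots> = (\<Sum>t\<in>basis (length B). mat_T G B i j p t * fps_const (F t q))"
    using is_hom_mat_commute[OF G p] by simp
  also have "\<dots> = (\<Sum>s\<in>basis (length B). fps_const (G p s) * T_mat B F i j s q)"
    unfolding T_mat_def mat_T_def
    by (simp add: sum_distrib_left sum_distrib_right mult.assoc) (rule sum.swap)
  also have "\<dots> = (\<Sum>s\<in>basis (length B). fps_const (G p s) * mat_T F A i j s q)"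
    using is_hom_mat_commute[OF F _ q] by simp
  also have "\<dots> = mat_T (mat_mult (length B) G F) A i j p q"
    unfolding mat_T_def mat_mult_def fps_const_sum
    by (simp add: sum_distrib_left sum_distrib_right mult.assoc flip: fps_const_mult) (rule sum.swap)
  finally show "T_mat C (mat_mult (length B) G F) i j p q = mat_T (mat_mult (length B) G F) A i j p q" .
qed

lemma sum_basis_append:
  "(\<Sum>t\<in>basis (n1 + n2). h t) = (\<Sum>t1\<in>basis n1. \<Sum>t2\<in>basis n2. h (t1 @ t2))"
proof -
  have eq: "basis (n1 + n2) = (\<lambda>(x, y). x @ y) ` (basis n1 \<times> basis n2)"
  proof (intro set_eqI iffI)
    fix t assume "t \<in> basis (n1 + n2)"
    then have "t = take n1 t @ drop n1 t" "take n1 t \<in> basis n1" "drop n1 t \<in> basis n2" by auto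
    then show "t \<in> (\<lambda>(x, y). x @ y) ` (basis n1 \<times> basis n2)"
      by (intro image_eqI[of _ _ "(take n1 t, drop n1 t)"]) simp_all
  qed auto
  have inj: "inj_on (\<lambda>(x, y). x @ y) (basis n1 \<times> basis n2)"
    by (auto simp: inj_on_def)
  have "(\<Sum>t\<in>basis (n1 + n2). h t) = (\<Sum>z\<in>basis n1 \<times> basis n2. h (fst z @ snd z))"
    unfolding eq by (subst sum.reindex[OF inj]) (simp add: case_prod_beta)
  then show ?thesis
    by (simp add: sum.cartesian_product case_prod_beta)
qed

lemma sum_sum_sum_factor:
  fixes f :: "'c \<Rightarrow> 'd :: comm_semiring_1"
  shows "(\<Sum>t1\<in>S1. \<Sum>t2\<in>S2. \<Sum>c\<in>C. f c * g c t1 * h c t2) = (\<Sum>c\<in>C. f c * sum (g c) S1 * sum (h c) S2)"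
proof -
  have "f c * sum (g c) S1 * sum (h c) S2 = (\<Sum>t1\<in>S1. \<Sum>t2\<in>S2. f c * g c t1 * h c t2)" for c
    unfolding sum_product[symmetric] by (simp add: sum_distrib_left)
  then have "(\<Sum>c\<in>C. f c * sum (g c) S1 * sum (h c) S2) = (\<Sum>t1\<in>S1. \<Sum>c\<in>C. \<Sum>t2\<in>S2. f c * g c t1 * h c t2)"
    by (simp add: sum.swap[of _ C S1])
  then show ?thesis
    by (simp add: sum.swap[of _ C S2])
qed

lemma T_mat_tensor:
  assumes F_parity: "\<And>t. F t q1 \<noteq> 0 \<Longrightarrow> even (odd_count t) \<longleftrightarrow> even (odd_count q1)"
    and "length p1 = length B1" "length p2 = length B2"
  shows "T_mat (B1 @ B2) (mat_tensor (length q1) (length B1) F G) i j (p1 @ p2) (q1 @ q2) =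
    (\<Sum>c\<in>UNIV. (-1) ^ ((par i + par c) * odd_count q1) * T_mat B1 F c j p1 q1 * T_mat B2 G i c p2 q2)"
proof -
  let ?s = "\<lambda>c. (-1 :: complex fps) ^ ((par i + par c) * odd_count q1)"
  have "T_coeff (B1 @ B2) i j (p1 @ p2) (t1 @ t2) * fps_const (F t1 q1 * G t2 q2)
      = (\<Sum>c\<in>UNIV. ?s c * (T_coeff B1 c j p1 t1 * fps_const (F t1 q1)) * (T_coeff B2 i c p2 t2 * fps_const (G t2 q2)))"
    if "length t1 = length B1" "length t2 = length B2" for t1 t2
  proof (cases "F t1 q1 = 0")
    case False
    then have "(-1 :: complex fps) ^ ((par i + par c) * odd_count t1) = ?s c" for c
      using F_parity by (blast intro: neg_one_power_mult_cong)
    with that assms(2,3) show ?thesis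
      by (simp add: T_coeff_append sum_distrib_left sum_distrib_right mult_ac flip: fps_const_mult)
  qed simp
  then have "T_mat (B1 @ B2) (mat_tensor (length q1) (length B1) F G) i j (p1 @ p2) (q1 @ q2)
      = (\<Sum>t1\<in>basis (length B1). \<Sum>t2\<in>basis (length B2). \<Sum>c\<in>UNIV.
          ?s c * (T_coeff B1 c j p1 t1 * fps_const (F t1 q1)) * (T_coeff B2 i c p2 t2 * fps_const (G t2 q2)))"
    unfolding T_mat_def length_append sum_basis_append by (simp add: mat_tensor_def)
  then show ?thesis
    unfolding sum_sum_sum_factor by (simp add: T_mat_def)
qed

lemma mat_T_tensor:
  assumes "length q1 = length A1" "length q2 = length A2"
  shows "mat_T (mat_tensor (length A1) (length p1) F G) (A1 @ A2) i j (p1 @ p2) (q1 @ q2) =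
    (\<Sum>c\<in>UNIV. (-1) ^ ((par i + par c) * odd_count q1) * mat_T F A1 c j p1 q1 * mat_T G A2 i c p2 q2)"
proof -
  let ?s = "\<lambda>c. (-1 :: complex fps) ^ ((par i + par c) * odd_count q1)"
  have "mat_T (mat_tensor (length A1) (length p1) F G) (A1 @ A2) i j (p1 @ p2) (q1 @ q2)
      = (\<Sum>t1\<in>basis (length A1). \<Sum>t2\<in>basis (length A2). \<Sum>c\<in>UNIV.
          ?s c * (fps_const (F p1 t1) * T_coeff A1 c j t1 q1) * (fps_const (G p2 t2) * T_coeff A2 i c t2 q2))"
    unfolding mat_T_def length_append sum_basis_append using assms
    by (intro sum.cong refl)
      (simp add: mat_tensor_def T_coeff_append sum_distrib_left mult_ac flip: fps_const_mult)
  then show ?thesis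
    unfolding sum_sum_sum_factor by (simp add: mat_T_def)
qed

lemma is_hom_mat_tensor:
  assumes F: "is_hom_mat A1 B1 F" and G: "is_hom_mat A2 B2 G"
  shows "is_hom_mat (A1 @ A2) (B1 @ B2) (mat_tensor (length A1) (length B1) F G)"
  unfolding is_hom_mat_def
proof (intro conjI allI impI)
  fix p q :: "bool list"
  assume "mat_tensor (length A1) (length B1) F G p q \<noteq> 0"
  then have "F (take (length B1) p) (take (length A1) q) \<noteq> 0" "G (drop (length B1) p) (drop (length A1) q) \<noteq> 0"
    by (auto simp: mat_tensor_def)
  note F_supp = is_hom_mat_support[OF F this(1)] and G_supp = is_hom_mat_support[OF G this(2)]
  then show "length p = length (B1 @ B2)" "length q = length (A1 @ A2)"
    by auto
  have "odd_count p = odd_count (take (length B1) p) + odd_count (drop (length B1) p)"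
    "odd_count q = odd_count (take (length A1) q) + odd_count (drop (length A1) q)"
    by (simp_all flip: odd_count_append)
  with F_supp G_supp show "even (odd_count p) \<longleftrightarrow> even (odd_count q)"
    by simp
next
  fix i j :: bool and p q :: "bool list"
  assume lp: "length p = length (B1 @ B2)" and lq: "length q = length (A1 @ A2)"
  obtain p1 p2 where p: "p = p1 @ p2" "length p1 = length B1" "length p2 = length B2"
    using lp by (intro that[of "take (length B1) p" "drop (length B1) p"]) auto
  obtain q1 q2 where q: "q = q1 @ q2" "length q1 = length A1" "length q2 = length A2"
    using lq by (intro that[of "take (length A1) q" "drop (length A1) q"]) auto
  have "\<And>t. F t q1 \<noteq> 0 \<Longrightarrow> even (odd_count t) \<longleftrightarrow> even (odd_count q1)"
    using is_hom_mat_support[OF F] by blast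
  with p q show "T_mat (B1 @ B2) (mat_tensor (length A1) (length B1) F G) i j p q =
      mat_T (mat_tensor (length A1) (length B1) F G) (A1 @ A2) i j p q"
    using T_mat_tensor[of F q1 p1 B1 p2 B2 G] mat_T_tensor[of q1 A1 q2 A2 p1 F G]
    by (simp add: is_hom_mat_commute[OF F] is_hom_mat_commute[OF G])
qed

lemma is_hom_mat_smult:
  assumes "is_hom_mat A B F"
  shows "is_hom_mat A B (\<lambda>p q. c * F p q)"
proof -
  have "T_mat B (\<lambda>p q. c * F p q) i j p q = fps_const c * T_mat B F i j p q"
    "mat_T (\<lambda>p q. c * F p q) A i j p q = fps_const c * mat_T F A i j p q" for i j p q
    unfolding T_mat_def mat_T_def by (simp_all add: sum_distrib_left mult_ac flip: fps_const_mult)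
  with assms show ?thesis
    unfolding is_hom_mat_def by auto
qed

definition sends_vac :: "nat \<Rightarrow> nat \<Rightarrow> coeff_mat \<Rightarrow> complex \<Rightarrow> bool" where
  "sends_vac nA nB F c \<longleftrightarrow> (\<forall>p. F p (replicate nA False) = (if p = replicate nB False then c else 0))"

lemma sends_vac_one: "sends_vac n n (mat_one n) 1"
  by (auto simp: sends_vac_def mat_one_def)

lemma sends_vac_mult:
  assumes "sends_vac nA nB F c" "sends_vac nB nC G d"
  shows "sends_vac nA nC (mat_mult nB G F) (d * c)"
  unfolding sends_vac_def
proof
  fix p
  have "mat_mult nB G F p (replicate nA False) = (\<Sum>t\<in>basis nB. if t = replicate nB False then G p t * c else 0)"
    unfolding mat_mult_def using assms(1) unfolding sends_vac_def by (intro sum.cong refl) simp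
  also have "\<dots> = G p (replicate nB False) * c"
    by (simp add: sum.delta)
  finally show "mat_mult nB G F p (replicate nA False) = (if p = replicate nC False then d * c else 0)"
    using assms(2) unfolding sends_vac_def by simp
qed

lemma sends_vac_tensor:
  assumes "sends_vac nA1 nB1 F c" "sends_vac nA2 nB2 G d"
  shows "sends_vac (nA1 + nA2) (nB1 + nB2) (mat_tensor nA1 nB1 F G) (c * d)"
  unfolding sends_vac_def
proof
  fix p :: "bool list"
  have "(take nB1 p = replicate nB1 False \<and> drop nB1 p = replicate nB2 False) \<longleftrightarrow> p = replicate (nB1 + nB2) False"
  proof
    assume "take nB1 p = replicate nB1 False \<and> drop nB1 p = replicate nB2 False"
    then have "p = replicate nB1 False @ replicate nB2 False"
      by (metis append_take_drop_id)
    then show "p = replicate (nB1 + nB2) False"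
      by (simp add: replicate_add)
  qed (simp add: replicate_add[symmetric] take_replicate)
  then show "mat_tensor nA1 nB1 F G p (replicate (nA1 + nA2) False) = (if p = replicate (nB1 + nB2) False then c * d else 0)"
    using assms unfolding sends_vac_def mat_tensor_def by (auto simp: replicate_add)
qed

definition vac_hom :: "evtensor \<Rightarrow> evtensor \<Rightarrow> bool" where
  "vac_hom A B \<longleftrightarrow> (\<exists>F. is_hom_mat A B F \<and> sends_vac (length A) (length B) F 1)"

lemma vac_homI:
  assumes "is_hom_mat A B F" "sends_vac (length A) (length B) F c" "c \<noteq> 0"
  shows "vac_hom A B"
  unfolding vac_hom_def
proof (intro exI conjI)
  show "is_hom_mat A B (\<lambda>p q. inverse c * F p q)"
    using assms(1) by (rule is_hom_mat_smult)
  show "sends_vac (length A) (length B) (\<lambda>p q. inverse c * F p q) 1"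
    using assms(2,3) by (simp add: sends_vac_def)
qed

lemma vac_hom_refl: "vac_hom A A"
  using is_hom_mat_one sends_vac_one by (auto simp: vac_hom_def)

lemma vac_hom_trans: "vac_hom A B \<Longrightarrow> vac_hom B C \<Longrightarrow> vac_hom A C"
  unfolding vac_hom_def using is_hom_mat_mult sends_vac_mult[where c = 1 and d = 1] by fastforce

lemma vac_hom_append: "vac_hom A1 B1 \<Longrightarrow> vac_hom A2 B2 \<Longrightarrow> vac_hom (A1 @ A2) (B1 @ B2)"
  unfolding vac_hom_def using is_hom_mat_tensor sends_vac_tensor[where c = 1 and d = 1] by fastforce

subsection \<open>The elementary homomorphisms\<close>

definition fps_geom :: "complex \<Rightarrow> complex fps" where
  "fps_geom z = Abs_fps (\<lambda>m. z ^ m)"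

lemma fps_geom_inverse: "(1 - fps_const z * fps_X) * fps_geom z = 1"
proof (rule fps_ext)
  show "fps_nth ((1 - fps_const z * fps_X) * fps_geom z) n = fps_nth 1 n" for n
    by (cases n) (simp_all add: fps_geom_def algebra_simps)
qed

text \<open>\<open>fps_X * fps_geom z\<close> is the expansion of \<open>(x - z)\<^sup>-\<^sup>1\<close> in \<open>x\<^sup>-\<^sup>1\<close>, so this is the partial fraction
  identity \<open>(y - z) / ((x - y)(x - z)) = 1/(x - y) - 1/(x - z)\<close> on which both commutation checks rest.\<close>

lemma fps_geom_partial_fraction:
  "(fps_const y - fps_const z) * (fps_X * fps_geom y) * (fps_X * fps_geom z) = fps_X * fps_geom y - fps_X * fps_geom z"
  using fps_geom_inverse[of y] fps_geom_inverse[of z] by algebra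

lemma evT_eq_fps_geom:
  "evT lam z a b p q = fps_const (if a = b \<and> p = q then 1 else 0) +
    fps_const ((-1) ^ par b * glE lam b a p q) * (fps_X * fps_geom z)"
proof (rule fps_ext)
  show "fps_nth (evT lam z a b p q) n = fps_nth (fps_const (if a = b \<and> p = q then 1 else 0) +
    fps_const ((-1) ^ par b * glE lam b a p q) * (fps_X * fps_geom z)) n" for n
    by (cases n) (simp_all add: evT_def fps_geom_def)
qed

lemma T_coeff_two:
  "T_coeff [m1, m2] i j [p1, p2] [q1, q2] =
    (\<Sum>c\<in>UNIV. (-1) ^ ((par i + par c) * par q1) * evT (fst m1) (snd m1) c j p1 q1 * evT (fst m2) (snd m2) i c p2 q2)"
  using T_coeff_append[of "[p1]" "[m1]" "[q1]" "[p2]" "[m2]" "[q2]" i j]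
  by (simp add: T_coeff_single odd_count_def par_def)

lemma basis_Suc_0: "basis (Suc 0) = {[False], [True]}"
  by (auto simp: basis_def length_Suc_conv)

lemma basis_Suc_Suc_0: "basis (Suc (Suc 0)) = {[False, False], [False, True], [True, False], [True, True]}"
  by (auto simp: basis_def length_Suc_conv)

text \<open>\<open>R_mat d = 1 + d P\<close>, where \<open>P\<close> is the graded flip of \<open>\<complex>\<^sup>1\<^sup>|\<^sup>1 \<otimes> \<complex>\<^sup>1\<^sup>|\<^sup>1\<close>.\<close>

definition R_mat :: "complex \<Rightarrow> coeff_mat" where
  "R_mat d p q = (if p = [False, False] \<and> q = [False, False] then 1 + d
    else if p = [False, True] \<and> q = [False, True] then 1
    else if p = [False, True] \<and> q = [True, False] then d
    else if p = [True, False] \<and> q = [False, True] then d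
    else if p = [True, False] \<and> q = [True, False] then 1
    else if p = [True, True] \<and> q = [True, True] then 1 - d else 0)"

lemma R_mat_commute:
  "T_mat [((1, 0), x), ((1, 0), y)] (R_mat (y - x)) i j [p1, p2] [q1, q2] =
    mat_T (R_mat (y - x)) [((1, 0), y), ((1, 0), x)] i j [p1, p2] [q1, q2]"
  apply (cases i; cases j; cases p1; cases p2; cases q1; cases q2)
  apply (simp_all add: T_mat_def mat_T_def basis_Suc_Suc_0 T_coeff_two evT_eq_fps_geom glE_def par_def R_mat_def
      UNIV_bool flip: fps_const_add fps_const_sub fps_const_mult fps_const_neg del: mult_cancel_left mult_cancel_right)
  apply (algebra | (insert fps_geom_partial_fraction[of x y], algebra))+
  done

lemma is_hom_mat_R: "is_hom_mat [((1, 0), y), ((1, 0), x)] [((1, 0), x), ((1, 0), y)] (R_mat (y - x))"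
proof (rule is_hom_matI)
  show "length p = length [((1::complex, 0::complex), x), ((1, 0), y)] \<and>
      length q = length [((1::complex, 0::complex), y), ((1, 0), x)] \<and> (even (odd_count p) \<longleftrightarrow> even (odd_count q))"
    if "R_mat (y - x) p q \<noteq> 0" for p q
    using that unfolding R_mat_def by (auto simp: odd_count_def split: if_splits)
  show "T_mat [((1, 0), x), ((1, 0), y)] (R_mat (y - x)) i j p q = mat_T (R_mat (y - x)) [((1, 0), y), ((1, 0), x)] i j p q"
    if "length p = length [((1::complex, 0::complex), x), ((1, 0), y)]"
      and "length q = length [((1::complex, 0::complex), y), ((1, 0), x)]" for i j p q
    using that by (auto simp: length_Suc_conv R_mat_commute)
qed

lemma vac_hom_swap:
  assumes "x \<noteq> y + 1"
  shows "vac_hom [((1, 0), y), ((1, 0), x)] [((1, 0), x), ((1, 0), y)]"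
proof (rule vac_homI[OF is_hom_mat_R])
  show "sends_vac (length [((1::complex, 0::complex), y), ((1, 0), x)]) (length [((1::complex, 0::complex), x), ((1, 0), y)])
      (R_mat (y - x)) (1 + (y - x))"
    by (auto simp: sends_vac_def R_mat_def)
  show "1 + (y - x) \<noteq> 0"
    using assms by (auto simp: algebra_simps)
qed

definition fusion_mat :: "nat \<Rightarrow> coeff_mat" where
  "fusion_mat l p q = (if p = [False] \<and> q = [False, False] then of_nat l + 1
    else if p = [True] \<and> q = [False, True] then 1
    else if p = [True] \<and> q = [True, False] then of_nat l else 0)"

lemma fusion_mat_commute:
  "T_mat [((of_nat l + 1, 0), z)] (fusion_mat l) i j [p1] [q1, q2] =
    mat_T (fusion_mat l) [((of_nat l, 0), z), ((1, 0), z - of_nat l)] i j [p1] [q1, q2]"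
  apply (cases i; cases j; cases p1; cases q1; cases q2)
  apply (simp_all add: T_mat_def mat_T_def basis_Suc_0 basis_Suc_Suc_0 T_coeff_single T_coeff_two evT_eq_fps_geom
      glE_def par_def fusion_mat_def UNIV_bool 
      flip: fps_const_add fps_const_sub fps_const_mult fps_const_neg del: mult_cancel_left mult_cancel_right)
  \<comment> \<open>simp cancels the factors \<open>l\<close> and \<open>l + 1\<close>, leaving disjunctions whose second disjunct is the identity\<close>
  apply ((rule disjI2)?, (algebra | (insert fps_geom_partial_fraction[of z "z - of_nat l", folded fps_const_sub]
      fps_geom_inverse[of z] fps_geom_inverse[of "z - of_nat l", folded fps_const_sub], algebra)))+
  done

lemma is_hom_mat_fusion:
  "is_hom_mat [((of_nat l, 0), z), ((1, 0), z - of_nat l)] [((of_nat l + 1, 0), z)] (fusion_mat l)"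
proof (rule is_hom_matI)
  show "length p = length [((of_nat l + 1 :: complex, 0 :: complex), z)] \<and>
      length q = length [((of_nat l :: complex, 0 :: complex), z), ((1, 0), z - of_nat l)] \<and>
      (even (odd_count p) \<longleftrightarrow> even (odd_count q))"
    if "fusion_mat l p q \<noteq> 0" for p q
    using that unfolding fusion_mat_def by (auto simp: odd_count_def split: if_splits)
  show "T_mat [((of_nat l + 1, 0), z)] (fusion_mat l) i j p q =
      mat_T (fusion_mat l) [((of_nat l, 0), z), ((1, 0), z - of_nat l)] i j p q"
    if "length p = length [((of_nat l + 1 :: complex, 0 :: complex), z)]"
      and "length q = length [((of_nat l :: complex, 0 :: complex), z), ((1, 0), z - of_nat l)]" for i j p q
    using that by (auto simp: length_Suc_conv fusion_mat_commute)
qed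

lemma vac_hom_fusion: "vac_hom [((of_nat l, 0), z), ((1, 0), z - of_nat l)] [((of_nat l + 1, 0), z)]"
proof (rule vac_homI[OF is_hom_mat_fusion])
  show "sends_vac (length [((of_nat l :: complex, 0 :: complex), z), ((1, 0), z - of_nat l)])
      (length [((of_nat l + 1 :: complex, 0 :: complex), z)]) (fusion_mat l) (of_nat l + 1)"
    by (auto simp: sends_vac_def fusion_mat_def)
  show "(of_nat l + 1 :: complex) \<noteq> 0"
    using of_nat_neq_0[of l] by (simp add: add.commute)
qed

subsection \<open>Reordering and fusing the factors of \<open>V(a)\<close>\<close>

definition V_tensor :: "complex list \<Rightarrow> evtensor" where
  "V_tensor a = map (\<lambda>z. ((1, 0), z)) a"

lemma V_tensor_simps [simp]:
  "V_tensor [] = []" "V_tensor (z # a) = ((1, 0), z) # V_tensor a" "V_tensor (a @ a') = V_tensor a @ V_tensor a'"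
  "length (V_tensor a) = length a"
  by (simp_all add: V_tensor_def)

lemma vac_hom_move_to_front:
  assumes "\<forall>y\<in>set u1. x \<noteq> y + 1"
  shows "vac_hom (V_tensor (u1 @ x # u2)) (V_tensor (x # u1 @ u2))"
  using assms
proof (induction u1)
  case Nil
  show ?case by (simp add: vac_hom_refl)
next
  case (Cons y u1)
  have "vac_hom (V_tensor [y] @ V_tensor (u1 @ x # u2)) (V_tensor [y] @ V_tensor (x # u1 @ u2))"
    using vac_hom_refl Cons.IH Cons.prems by (intro vac_hom_append) simp_all
  then have "vac_hom (V_tensor (y # u1 @ x # u2)) ([((1, 0), y), ((1, 0), x)] @ V_tensor (u1 @ u2))"
    by simp
  moreover have "vac_hom ([((1, 0), y), ((1, 0), x)] @ V_tensor (u1 @ u2)) ([((1, 0), x), ((1, 0), y)] @ V_tensor (u1 @ u2))"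
    using Cons.prems by (intro vac_hom_append vac_hom_swap vac_hom_refl) simp
  ultimately show ?case
    by (auto dest: vac_hom_trans)
qed

lemma vac_hom_reorder:
  assumes "mset u = mset w" "sorted_wrt (\<lambda>x y. y \<noteq> x + 1) u"
  shows "vac_hom (V_tensor u) (V_tensor w)"
  using assms
proof (induction w arbitrary: u)
  case Nil
  then show ?case by (simp add: vac_hom_refl)
next
  case (Cons x w)
  have "x \<in> set u"
    using mset_eq_setD[OF Cons.prems(1)] by simp
  then obtain u1 u2 where u: "u = u1 @ x # u2"
    by (meson split_list)
  with Cons.prems have front: "\<forall>y\<in>set u1. x \<noteq> y + 1"
    and rest: "mset (u1 @ u2) = mset w" "sorted_wrt (\<lambda>x y. y \<noteq> x + 1) (u1 @ u2)"
    by (simp_all add: sorted_wrt_append)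
  have "vac_hom (V_tensor [x] @ V_tensor (u1 @ u2)) (V_tensor [x] @ V_tensor w)"
    using vac_hom_refl Cons.IH[OF rest] by (rule vac_hom_append)
  with vac_hom_move_to_front[OF front, of u2] show ?case
    unfolding u by (auto dest: vac_hom_trans)
qed

definition segment :: "complex \<Rightarrow> nat \<Rightarrow> complex list" where
  "segment z l = map (\<lambda>m. z - of_nat m) [0..<l]"

lemma vac_hom_fuse_segment: "0 < l \<Longrightarrow> vac_hom (V_tensor (segment z l)) [((of_nat l, 0), z)]"
proof (induction l)
  case (Suc l)
  show ?case
  proof (cases "l = 0")
    case True
    then show ?thesis by (simp add: segment_def vac_hom_refl)
  next
    case False
    then have "vac_hom (V_tensor (segment z l) @ [((1, 0), z - of_nat l)]) ([((of_nat l, 0), z)] @ [((1, 0), z - of_nat l)])"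
      using Suc.IH by (intro vac_hom_append vac_hom_refl) simp
    then have "vac_hom (V_tensor (segment z (Suc l))) [((of_nat l + 1, 0), z)]"
      using vac_hom_fusion[of l z] by (simp add: segment_def vac_hom_trans)
    then show ?thesis
      by (simp add: add.commute)
  qed
qed simp

definition L_tensor :: "(nat \<Rightarrow> nat) \<Rightarrow> (nat \<Rightarrow> complex) \<Rightarrow> nat \<Rightarrow> evtensor" where
  "L_tensor lam b k = map (\<lambda>s. ((of_nat (lam s), 0), b s)) [0..<k]"

lemma length_L_tensor [simp]: "length (L_tensor lam b k) = k"
  by (simp add: L_tensor_def)

lemma vac_hom_fuse_segments:
  "\<forall>s<k. 0 < lam s \<Longrightarrow> vac_hom (V_tensor (concat (map (\<lambda>s. segment (b s) (lam s)) [0..<k]))) (L_tensor lam b k)"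
proof (induction k)
  case 0
  then show ?case by (simp add: L_tensor_def vac_hom_refl)
next
  case (Suc k)
  then have "vac_hom (V_tensor (concat (map (\<lambda>s. segment (b s) (lam s)) [0..<k])) @ V_tensor (segment (b k) (lam k)))
      (L_tensor lam b k @ [((of_nat (lam k), 0), b k)])"
    by (intro vac_hom_append vac_hom_fuse_segment) simp_all
  then show ?case
    by (simp add: L_tensor_def)
qed

lemma mset_concat_segments:
  "mset (concat (map (\<lambda>s. segment (b s) (lam s)) [0..<k])) = (\<Sum>s<k. mset (map (\<lambda>m. b s - of_nat m) [0..<lam s]))"
  by (induction k) (simp_all add: segment_def)

lemma T_coeff_V_tensor: "T_coeff (V_tensor a) = Yent (\<lambda>_. (1, 0)) (\<lambda>s. a ! s) (length a)"
  unfolding T_coeff_def V_tensor_def length_map by (intro ext Yent_cong) simp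

lemma T_coeff_L_tensor: "T_coeff (L_tensor lam b k) = Yent (\<lambda>s. (of_nat (lam s), 0)) b k"
  unfolding T_coeff_def L_tensor_def length_map length_upt diff_zero by (intro ext Yent_cong) simp

subsection \<open>From intertwining matrices to module homomorphisms\<close>

definition mat_apply :: "nat \<Rightarrow> nat \<Rightarrow> coeff_mat \<Rightarrow> (bool list \<Rightarrow> complex) \<Rightarrow> bool list \<Rightarrow> complex" where
  "mat_apply nA nB F v = (\<lambda>p. if length p = nB then \<Sum>q\<in>basis nA. F p q * v q else 0)"

lemma mat_apply_vac:
  assumes "sends_vac nA nB F 1"
  shows "mat_apply nA nB F (vac nA) = vac nB"
proof
  fix p
  have "(\<Sum>q\<in>basis nA. F p q * vac nA q) = (\<Sum>q\<in>basis nA. if q = replicate nA False then F p q else 0)"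
    by (intro sum.cong) (simp_all add: vac_def)
  then have "(\<Sum>q\<in>basis nA. F p q * vac nA q) = F p (replicate nA False)"
    by (simp add: sum.delta')
  with assms show "mat_apply nA nB F (vac nA) p = vac nB p"
    by (auto simp: mat_apply_def sends_vac_def vac_def)
qed

lemma mat_apply_homog:
  assumes "is_hom_mat A B F" "v \<in> homog (length A) e"
  shows "mat_apply (length A) (length B) F v \<in> homog (length B) e"
proof -
  have "bparity p = e" if "mat_apply (length A) (length B) F v p \<noteq> 0" for p
  proof -
    have "(\<Sum>q\<in>basis (length A). F p q * v q) \<noteq> 0"
      using that by (simp add: mat_apply_def split: if_splits)
    then obtain q where "F p q * v q \<noteq> 0"
      by (meson sum.not_neutral_contains_not_neutral)
    then have "F p q \<noteq> 0" "v q \<noteq> 0"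
      by simp_all
    then have "even (odd_count p) \<longleftrightarrow> even (odd_count q)" "bparity q = e"
      using is_hom_mat_support[OF assms(1)] assms(2) by (simp_all add: homog_def)
    then show ?thesis
      by (simp add: bparity_eq_odd_count)
  qed
  moreover have "mat_apply (length A) (length B) F v \<in> space (length B)"
    by (simp add: space_def mat_apply_def)
  ultimately show ?thesis
    unfolding homog_def by blast
qed

lemma mat_apply_Yact:
  assumes F: "is_hom_mat A B F"
    and A: "T_coeff A = Yent lamsA zsA (length A)" and B: "T_coeff B = Yent lamsB zsB (length B)"
  shows "mat_apply (length A) (length B) F (Yact lamsA zsA (length A) r i j v)
    = Yact lamsB zsB (length B) r i j (mat_apply (length A) (length B) F v)"
proof
  fix p :: "bool list"
  let ?A = "\<lambda>q t. fps_nth (Yent lamsA zsA (length A) i j q t) r"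
  let ?B = "\<lambda>s. fps_nth (Yent lamsB zsB (length B) i j p s) r"
  have coeff: "(\<Sum>s\<in>basis (length B). ?B s * F s t) = (\<Sum>q\<in>basis (length A). F p q * ?A q t)"
    if "length p = length B" "length t = length A" for t
    using arg_cong[OF is_hom_mat_commute[OF F that, of i j], of "\<lambda>f. fps_nth f r"]
    unfolding T_mat_def mat_T_def A B by (simp add: fps_sum_nth mult.commute)
  show "mat_apply (length A) (length B) F (Yact lamsA zsA (length A) r i j v) p
      = Yact lamsB zsB (length B) r i j (mat_apply (length A) (length B) F v) p"
  proof (cases "length p = length B")
    case True
    have "(\<Sum>q\<in>basis (length A). F p q * (\<Sum>t\<in>basis (length A). ?A q t * v t))
        = (\<Sum>t\<in>basis (length A). (\<Sum>q\<in>basis (length A). F p q * ?A q t) * v t)"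
      unfolding sum_distrib_left sum_distrib_right mult.assoc by (rule sum.swap)
    also have "\<dots> = (\<Sum>t\<in>basis (length A). (\<Sum>s\<in>basis (length B). ?B s * F s t) * v t)"
      using coeff[OF True] by simp
    also have "\<dots> = (\<Sum>s\<in>basis (length B). ?B s * (\<Sum>t\<in>basis (length A). F s t * v t))"
      unfolding sum_distrib_left sum_distrib_right mult.assoc by (rule sum.swap)
    finally show ?thesis
      using True by (simp add: mat_apply_def Yact_def)
  qed (simp add: mat_apply_def Yact_def)
qed

lemma Yhom_mat_apply:
  assumes F: "is_hom_mat A B F"
    and A: "length A = nA" "T_coeff A = Yent lamsA zsA nA"
    and B: "length B = nB" "T_coeff B = Yent lamsB zsB nB"
  shows "Yhom lamsA zsA nA lamsB zsB nB (mat_apply nA nB F)"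
proof -
  let ?f = "mat_apply nA nB F"
  have "?f v \<in> space nB" for v
    by (simp add: mat_apply_def space_def)
  moreover have "?f (\<lambda>p. u p + w p) = (\<lambda>p. ?f u p + ?f w p)" for u w
    by (simp add: mat_apply_def sum.distrib distrib_left fun_eq_iff)
  moreover have "?f (\<lambda>p. c * u p) = (\<lambda>p. c * ?f u p)" for c u
    by (simp add: mat_apply_def sum_distrib_left mult.left_commute fun_eq_iff)
  ultimately show ?thesis
    unfolding Yhom_def using mat_apply_homog[OF F] mat_apply_Yact[OF F] A B by simp
qed

lemma Yhom_image_closed:
  assumes f: "Yhom lamsA zsA nA lamsB zsB nB f"
  shows "f ` space nA \<subseteq> space nB"
    and "u \<in> f ` space nA \<Longrightarrow> w \<in> f ` space nA \<Longrightarrow> (\<lambda>p. u p + w p) \<in> f ` space nA"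
    and "u \<in> f ` space nA \<Longrightarrow> (\<lambda>p. c * u p) \<in> f ` space nA"
    and "r \<ge> 1 \<Longrightarrow> u \<in> f ` space nA \<Longrightarrow> Yact lamsB zsB nB r i j u \<in> f ` space nA"
proof -
  from f have f_space: "\<And>v. v \<in> space nA \<Longrightarrow> f v \<in> space nB"
    and f_add: "\<And>u w. u \<in> space nA \<Longrightarrow> w \<in> space nA \<Longrightarrow> f (\<lambda>p. u p + w p) = (\<lambda>p. f u p + f w p)"
    and f_smult: "\<And>c u. u \<in> space nA \<Longrightarrow> f (\<lambda>p. c * u p) = (\<lambda>p. c * f u p)"
    and f_Yact: "\<And>r i j v. r \<ge> 1 \<Longrightarrow> v \<in> space nA \<Longrightarrow>
        f (Yact lamsA zsA nA r i j v) = Yact lamsB zsB nB r i j (f v)"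
    unfolding Yhom_def by blast+
  show "f ` space nA \<subseteq> space nB"
    using f_space by blast
  show "(\<lambda>p. u p + w p) \<in> f ` space nA" if "u \<in> f ` space nA" "w \<in> f ` space nA"
  proof -
    from that obtain u' w' where "u' \<in> space nA" "w' \<in> space nA" "u = f u'" "w = f w'"
      by blast
    then show ?thesis
      by (intro image_eqI[of _ _ "\<lambda>p. u' p + w' p"]) (simp add: f_add, simp add: space_def)
  qed
  show "(\<lambda>p. c * u p) \<in> f ` space nA" if "u \<in> f ` space nA"
  proof -
    from that obtain u' where "u' \<in> space nA" "u = f u'"
      by blast
    then show ?thesis
      by (intro image_eqI[of _ _ "\<lambda>p. c * u' p"]) (simp add: f_smult, simp add: space_def)
  qed
  show "Yact lamsB zsB nB r i j u \<in> f ` space nA" if "r \<ge> 1" "u \<in> f ` space nA"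
  proof -
    from that obtain u' where "u' \<in> space nA" "u = f u'"
      by blast
    with that(1) show ?thesis
      by (intro image_eqI[of _ _ "Yact lamsA zsA nA r i j u'"]) (simp add: f_Yact, simp add: space_def Yact_def)
  qed
qed

lemma Yhom_onto_if_cyclic:
  assumes f: "Yhom lamsA zsA nA lamsB zsB nB f" and vac: "f (vac nA) = vac nB" and cyc: "Ycyclic lamsB zsB nB"
  shows "f ` space nA = space nB"
proof -
  have "vac nB \<in> f ` space nA"
    by (rule image_eqI[of _ _ "vac nA"]) (simp add: vac, simp add: vac_def space_def)
  with Yhom_image_closed[OF f] have "f ` space nA \<subseteq> space nB \<and> vac nB \<in> f ` space nA
      \<and> (\<forall>u\<in>f ` space nA. \<forall>w\<in>f ` space nA. (\<lambda>p. u p + w p) \<in> f ` space nA)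
      \<and> (\<forall>c::complex. \<forall>u\<in>f ` space nA. (\<lambda>p. c * u p) \<in> f ` space nA)
      \<and> (\<forall>r\<ge>1. \<forall>i j. \<forall>u\<in>f ` space nA. Yact lamsB zsB nB r i j u \<in> f ` space nA)"
    by simp
  then show ?thesis
    by (rule mp[OF spec[OF cyc[unfolded Ycyclic_def], of "f ` space nA"]])
qed

lemma surjective_Yhom_if_vac_hom:
  assumes "vac_hom A B"
    and A: "length A = nA" "T_coeff A = Yent lamsA zsA nA"
    and B: "length B = nB" "T_coeff B = Yent lamsB zsB nB"
    and cyc: "Ycyclic lamsB zsB nB"
  shows "\<exists>f. Yhom lamsA zsA nA lamsB zsB nB f \<and> f ` space nA = space nB \<and> f (vac nA) = vac nB"
proof -
  from assms(1) obtain F where F: "is_hom_mat A B F" and F_vac: "sends_vac (length A) (length B) F 1"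
    unfolding vac_hom_def by blast
  have hom: "Yhom lamsA zsA nA lamsB zsB nB (mat_apply nA nB F)"
    using F A B by (rule Yhom_mat_apply)
  moreover have vac: "mat_apply nA nB F (vac nA) = vac nB"
    using F_vac A(1) B(1) by (simp add: mat_apply_vac)
  moreover have "mat_apply nA nB F ` space nA = space nB"
    using hom vac cyc by (rule Yhom_onto_if_cyclic)
  ultimately show ?thesis
    by blast
qed

theorem lemma5p2:
  fixes k :: nat and lam :: "nat \<Rightarrow> nat" and b :: "nat \<Rightarrow> complex" and a :: "complex list"
  assumes "\<forall>s<k. 0 < lam s"
    and "mset a = (\<Sum>s<k. mset (map (\<lambda>m. b s - of_nat m) [0..<lam s]))"
    and "sorted_wrt (\<lambda>x y. Re y \<le> Re x) a"
    and "Ycyclic (\<lambda>s. (of_nat (lam s), 0)) b k"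
  shows "\<exists>f. Yhom (\<lambda>_. (1, 0)) (\<lambda>s. a ! s) (length a) (\<lambda>s. (of_nat (lam s), 0)) b k f
           \<and> f ` space (length a) = space k
           \<and> f (vac (length a)) = vac k"
proof -
  have "sorted_wrt (\<lambda>x y. y \<noteq> x + 1) a"
    by (rule sorted_wrt_mono_rel[OF _ assms(3)]) auto
  moreover have "mset a = mset (concat (map (\<lambda>s. segment (b s) (lam s)) [0..<k]))"
    using assms(2) by (simp add: mset_concat_segments)
  ultimately have "vac_hom (V_tensor a) (L_tensor lam b k)"
    using vac_hom_reorder vac_hom_fuse_segments[OF assms(1)] by (blast intro: vac_hom_trans)
  then show ?thesis
    by (rule surjective_Yhom_if_vac_hom[OF _ _ T_coeff_V_tensor _ T_coeff_L_tensor assms(4)]) simp_all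
qed

end
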